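(* Let $d\ge1$, $k:=2^d-1$, and let $$X:=\{0\}\cup\Big\{\big(x_1,\dots,x_d,(4k)^{\sum_{i=1}^{d}2^{i-1}x_i}\big): x\in\{0,1\}^d\setminus\{0\}\Big\}\subseteq\mathbb{Z}^{d+1},$$ $P:=\operatorname{conv}(X)$, and $t:=\sum_{a\in X}a$. Then $P\cap\mathbb{Z}^{d+1}=X$, and whenever $t=\sum_{a\in X\setminus\{0\}}\mu_a a$ with all $\mu_a\in\mathbb{Z}_{\ge0}$, we have $\mu_a=1$ for every $a\in X\setminus\{0\}$. In particular every representation of $t$ as a nonnegative integer combination of integer points of $P$ uses all $2^d-1$ nonzero points of $X$ (each exactly once). *)

theory Defs
  imports "HOL-Analysis.Analysis"
begin

text \<open>Points of Z^(d+1) and R^(d+1) are represented as functions on nat,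
  with coordinates 0..d used (coordinate i corresponds to x_(i+1)) and all
  coordinates beyond d equal to zero.\<close>

definition cube01 :: "nat \<Rightarrow> (nat \<Rightarrow> nat) set" where
  "cube01 d = {x. (\<forall>i<d. x i \<in> {0, 1}) \<and> (\<forall>i\<ge>d. x i = 0)}"

definition liftpt :: "nat \<Rightarrow> (nat \<Rightarrow> nat) \<Rightarrow> (nat \<Rightarrow> int)" where
  "liftpt d x = (\<lambda>i. if i < d then int (x i)
      else if i = d then (4 * (2 ^ d - 1)) ^ (\<Sum>j<d. 2 ^ j * x j)
      else 0)"

definition Xset :: "nat \<Rightarrow> (nat \<Rightarrow> int) set" where
  "Xset d = {(\<lambda>_. 0)} \<union> liftpt d ` (cube01 d - {(\<lambda>_. 0)})"

definition tvec :: "nat \<Rightarrow> (nat \<Rightarrow> int)" where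
  "tvec d = (\<lambda>i. \<Sum>a\<in>Xset d. a i)"

definition convex_fn :: "(nat \<Rightarrow> real) set \<Rightarrow> bool" where
  "convex_fn C \<longleftrightarrow> (\<forall>x\<in>C. \<forall>y\<in>C. \<forall>u v. u \<ge> 0 \<longrightarrow> v \<ge> 0 \<longrightarrow> u + v = 1 \<longrightarrow>
      (\<lambda>i. u * x i + v * y i) \<in> C)"

definition conv_fn :: "(nat \<Rightarrow> real) set \<Rightarrow> (nat \<Rightarrow> real) set" where
  "conv_fn A = \<Inter>{C. A \<subseteq> C \<and> convex_fn C}"

definition to_real :: "(nat \<Rightarrow> int) \<Rightarrow> (nat \<Rightarrow> real)" where
  "to_real a = (\<lambda>i. real_of_int (a i))"

end

theory Submission
  imports Defs
begin

text \<open>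
  The first \<open>d\<close> coordinates of the points of \<open>X\<close> are pairwise distinct \<open>0/1\<close> vectors.
  A convex combination of \<open>0/1\<close> numbers that is an integer puts all its weight on
  numbers equal to it, so an integral point of \<open>P\<close> is a convex combination of points of
  \<open>X\<close> agreeing with it in the first \<open>d\<close> coordinates, that is, of a single point of \<open>X\<close>.

  For the second claim let \<open>n(x) = \<Sum>\<^sub>i 2^(i-1) x\<^sub>i\<close>, which is injective on \<open>{0,1}^d\<close>.
  If \<open>a\<^sub>i = 1\<close> for some \<open>i \<le> d\<close>, coordinate \<open>i\<close> of \<open>t = \<Sum> \<mu>\<^sub>a a\<close> gives
  \<open>\<mu>\<^sub>a \<le> t\<^sub>i < 2^d < 4k\<close>, so the last coordinate
  \<open>\<Sum>\<^sub>x (4k)^n(x) = \<Sum>\<^sub>x \<mu>\<^sub>x (4k)^n(x)\<close> compares two base \<open>4k\<close> expansions, and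
  their uniqueness forces every \<open>\<mu>\<^sub>x = 1\<close>.
\<close>

lemma digit_sum_less_power:
  fixes f :: "nat \<Rightarrow> nat"
  assumes "\<forall>m<B. f m < M"
  shows "(\<Sum>m<B. f m * M ^ m) < M ^ B"
  using assms
proof (induction B)
  case 0
  then show ?case by simp
next
  case (Suc B)
  then have "f B + 1 \<le> M" by (simp add: Suc_le_eq)
  have "(\<Sum>m<Suc B. f m * M ^ m) = (\<Sum>m<B. f m * M ^ m) + f B * M ^ B" by simp
  also have "\<dots> < M ^ B + f B * M ^ B" using Suc by simp
  also have "\<dots> = (f B + 1) * M ^ B" by simp
  also have "\<dots> \<le> M * M ^ B" using \<open>f B + 1 \<le> M\<close> by (rule mult_right_mono) simp
  finally show ?case by simp
qed

lemma digit_sum_unique: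
  fixes f g :: "nat \<Rightarrow> nat"
  assumes "\<forall>m<B. f m < M" "\<forall>m<B. g m < M"
    and "(\<Sum>m<B. f m * M ^ m) = (\<Sum>m<B. g m * M ^ m)"
  shows "\<forall>m<B. f m = g m"
  using assms
proof (induction B)
  case 0
  then show ?case by simp
next
  case (Suc B)
  define s where "s = (\<Sum>m<B. f m * M ^ m)"
  define s' where "s' = (\<Sum>m<B. g m * M ^ m)"
  have "s < M ^ B" "s' < M ^ B"
    unfolding s_def s'_def using Suc.prems by (auto intro: digit_sum_less_power)
  moreover have eq: "s + f B * M ^ B = s' + g B * M ^ B"
    using Suc.prems(3) by (simp add: s_def s'_def)
  moreover have "(r + c * M ^ B) div M ^ B = c" if "r < M ^ B" for r c :: nat
  proof -
    have "M ^ B \<noteq> 0" using that by linarith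
    then show ?thesis
      using that by (metis div_less div_mult_self1 add_0_right)
  qed
  ultimately have "f B = g B"
    by metis
  with eq have "s = s'" by simp
  with Suc have "\<forall>m<B. f m = g m" by (simp add: s_def s'_def)
  with \<open>f B = g B\<close> show ?case using less_Suc_eq by auto
qed

lemma digit_sum_unique_on:
  fixes f g e :: "'a \<Rightarrow> nat"
  assumes "finite S" "inj_on e S" "\<forall>s\<in>S. f s < M" "\<forall>s\<in>S. g s < M"
    and "(\<Sum>s\<in>S. f s * M ^ e s) = (\<Sum>s\<in>S. g s * M ^ e s)"
  shows "\<forall>s\<in>S. f s = g s"
proof (cases "S = {}")
  case False
  then have "M > 0" using assms(3) by fastforce
  obtain B where B: "e ` S \<subseteq> {..<B}"
    using \<open>finite S\<close> finite_nat_iff_bounded by blast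
  define digit where "digit h m = (if m \<in> e ` S then h (the_inv_into S e m) else 0)"
    for h :: "'a \<Rightarrow> nat" and m
  have digit_e: "digit h (e s) = h s" if "s \<in> S" for h s
    using that assms(2) by (simp add: digit_def the_inv_into_f_f)
  have digit_sum: "(\<Sum>s\<in>S. h s * M ^ e s) = (\<Sum>m<B. digit h m * M ^ m)" for h
  proof -
    have "(\<Sum>s\<in>S. h s * M ^ e s) = (\<Sum>m\<in>e ` S. digit h m * M ^ m)"
      using assms(2) by (simp add: sum.reindex digit_e)
    also have "\<dots> = (\<Sum>m<B. digit h m * M ^ m)"
      using B by (intro sum.mono_neutral_left) (auto simp: digit_def)
    finally show ?thesis .
  qed
  have "\<forall>m<B. digit f m < M" "\<forall>m<B. digit g m < M"
    using assms(3,4) \<open>M > 0\<close> by (auto simp: digit_def the_inv_into_f_f assms(2))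
  then have "\<forall>m<B. digit f m = digit g m"
    using assms(5) by (intro digit_sum_unique) (simp_all add: digit_sum)
  then show ?thesis
    using B by (metis digit_e image_subset_iff lessThan_iff)
qed simp

definition bin_val :: "nat \<Rightarrow> (nat \<Rightarrow> nat) \<Rightarrow> nat" where
  "bin_val d x = (\<Sum>j<d. x j * 2 ^ j)"

lemma cube01_less_2: "x \<in> cube01 d \<Longrightarrow> i < d \<Longrightarrow> x i < 2"
  unfolding cube01_def by auto

lemma cube01_outside: "x \<in> cube01 d \<Longrightarrow> d \<le> i \<Longrightarrow> x i = 0"
  unfolding cube01_def by auto

lemma cube01_eqI:
  assumes "x \<in> cube01 d" "y \<in> cube01 d" "\<forall>i<d. x i = y i"
  shows "x = y"
proof
  fix i
  show "x i = y i"
    using assms by (cases "i < d") (simp_all add: cube01_outside not_less)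
qed

lemma bin_val_less: "x \<in> cube01 d \<Longrightarrow> bin_val d x < 2 ^ d"
  unfolding bin_val_def by (intro digit_sum_less_power) (simp add: cube01_less_2)

lemma inj_on_bin_val: "inj_on (bin_val d) (cube01 d)"
proof (rule inj_onI)
  fix x y
  assume "x \<in> cube01 d" "y \<in> cube01 d" "bin_val d x = bin_val d y"
  then have "\<forall>i<d. x i = y i"
    by (intro digit_sum_unique[of d x 2 y]) (simp_all add: cube01_less_2 bin_val_def)
  with \<open>x \<in> cube01 d\<close> \<open>y \<in> cube01 d\<close> show "x = y" by (rule cube01_eqI)
qed

lemma finite_cube01: "finite (cube01 d)"
  and card_cube01_le: "card (cube01 d) \<le> 2 ^ d"
proof -
  have "bin_val d ` cube01 d \<subseteq> {..<2 ^ d}"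
    using bin_val_less by blast
  then show "finite (cube01 d)"
    using finite_imageD inj_on_bin_val finite_subset by blast
  have "card (cube01 d) = card (bin_val d ` cube01 d)"
    using inj_on_bin_val by (rule card_image[symmetric])
  also have "\<dots> \<le> 2 ^ d"
    using \<open>bin_val d ` cube01 d \<subseteq> {..<2 ^ d}\<close> card_mono[of "{..<2 ^ d :: nat}"] by simp
  finally show "card (cube01 d) \<le> 2 ^ d" .
qed

definition cube01_nz :: "nat \<Rightarrow> (nat \<Rightarrow> nat) set" where
  "cube01_nz d = cube01 d - {(\<lambda>_. 0)}"

lemma finite_cube01_nz: "finite (cube01_nz d)"
  unfolding cube01_nz_def using finite_cube01 by simp

lemma card_cube01_nz_less: "card (cube01_nz d) < 2 ^ d"
proof -
  have "(\<lambda>_. 0) \<in> cube01 d" by (simp add: cube01_def)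
  then have "card (cube01_nz d) = card (cube01 d) - 1"
    unfolding cube01_nz_def using finite_cube01 by simp
  also have "\<dots> < 2 ^ d"
    using card_cube01_le[of d] zero_less_power[of "2::nat" d] by linarith
  finally show ?thesis .
qed

lemma cube01_nz_obtain_one:
  assumes "x \<in> cube01_nz d"
  obtains i where "i < d" "x i = 1"
proof -
  from assms have x: "x \<in> cube01 d" "x \<noteq> (\<lambda>_. 0)" by (auto simp: cube01_nz_def)
  then obtain i where "x i \<noteq> 0" by auto
  moreover from this x(1) have "i < d" using cube01_outside not_less by blast
  ultimately show thesis using that cube01_less_2[OF x(1)] by fastforce
qed

lemma liftpt_below: "i < d \<Longrightarrow> liftpt d x i = int (x i)"
  by (simp add: liftpt_def)

lemma liftpt_top: "liftpt d x d = int (4 * (2 ^ d - 1)) ^ bin_val d x"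
  by (simp add: liftpt_def bin_val_def mult.commute of_nat_diff)

lemma liftpt_above: "d < i \<Longrightarrow> liftpt d x i = 0"
  by (simp add: liftpt_def)

lemma inj_on_liftpt: "inj_on (liftpt d) (cube01 d)"
proof (rule inj_onI)
  fix x y
  assume "x \<in> cube01 d" "y \<in> cube01 d" and eq: "liftpt d x = liftpt d y"
  moreover have "x i = y i" if "i < d" for i
    using fun_cong[OF eq, of i] that by (simp add: liftpt_below)
  ultimately show "x = y" by (blast intro: cube01_eqI)
qed

lemma liftpt_nonzero: "x \<in> cube01_nz d \<Longrightarrow> liftpt d x \<noteq> (\<lambda>_. 0)"
  by (metis cube01_nz_obtain_one liftpt_below of_nat_1 zero_neq_one)

lemma Xset_diff_zero: "Xset d - {(\<lambda>_. 0)} = liftpt d ` cube01_nz d"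
  unfolding Xset_def cube01_nz_def[symmetric] using liftpt_nonzero by fastforce

lemma sum_Xset_diff_zero:
  "(\<Sum>a\<in>Xset d - {(\<lambda>_. 0)}. h a) = (\<Sum>x\<in>cube01_nz d. h (liftpt d x))"
proof -
  have "inj_on (liftpt d) (cube01_nz d)"
    by (rule inj_on_subset[OF inj_on_liftpt]) (simp add: cube01_nz_def)
  then show ?thesis
    unfolding Xset_diff_zero by (simp add: sum.reindex)
qed

lemma Xset_cases:
  assumes "a \<in> Xset d"
  obtains "a = (\<lambda>_. 0)" | x where "x \<in> cube01_nz d" "a = liftpt d x"
proof (cases "a = (\<lambda>_. 0)")
  case False
  with assms have "a \<in> liftpt d ` cube01_nz d"
    unfolding Xset_diff_zero[symmetric] by simp
  with that(2) show thesis by blast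
qed (use that in blast)

lemma finite_Xset: "finite (Xset d)"
  unfolding Xset_def using finite_cube01 by simp

lemma Xset_coord_01:
  assumes "a \<in> Xset d" "i < d"
  shows "a i \<in> {0, 1}"
  using assms(1)
proof (cases rule: Xset_cases)
  case (2 x)
  then have "x i < 2"
    using assms(2) cube01_less_2 unfolding cube01_nz_def by blast
  with 2 assms(2) show ?thesis
    by (auto simp: liftpt_below less_2_cases_iff)
qed simp

lemma Xset_coord_above: "a \<in> Xset d \<Longrightarrow> d < i \<Longrightarrow> a i = 0"
  by (erule Xset_cases) (simp_all add: liftpt_above)

lemma Xset_eq_zero_iff:
  assumes "a \<in> Xset d"
  shows "a = (\<lambda>_. 0) \<longleftrightarrow> (\<forall>i<d. a i = 0)"
  using assms
proof (cases rule: Xset_cases)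
  case (2 x)
  then obtain i where "i < d" "x i = 1" using cube01_nz_obtain_one by blast
  with 2 have "a i = 1" by (simp add: liftpt_below)
  with \<open>i < d\<close> show ?thesis by auto
qed simp

lemma Xset_eqI:
  assumes a: "a \<in> Xset d" and b: "b \<in> Xset d" and eq: "\<forall>i<d. a i = b i"
  shows "a = b"
proof (cases "a = (\<lambda>_. 0) \<or> b = (\<lambda>_. 0)")
  case True
  then have "a = (\<lambda>_. 0)" "b = (\<lambda>_. 0)"
    using eq by (auto simp: Xset_eq_zero_iff[OF a] Xset_eq_zero_iff[OF b])
  then show ?thesis by simp
next
  case False
  with a b have "a \<in> liftpt d ` cube01_nz d" "b \<in> liftpt d ` cube01_nz d"
    by (simp_all flip: Xset_diff_zero)
  then obtain x y where x: "x \<in> cube01_nz d" "a = liftpt d x"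
    and y: "y \<in> cube01_nz d" "b = liftpt d y"
    by blast
  have "x i = y i" if "i < d" for i
    using eq that x(2) y(2) by (simp add: liftpt_below)
  then have "x = y"
    using x(1) y(1) by (intro cube01_eqI) (auto simp: cube01_nz_def)
  with x y show ?thesis by simp
qed

definition convex_combinations :: "(nat \<Rightarrow> real) set \<Rightarrow> (nat \<Rightarrow> real) set" where
  "convex_combinations A = {z. \<exists>l. (\<forall>a\<in>A. 0 \<le> l a) \<and> sum l A = 1
      \<and> z = (\<lambda>i. \<Sum>a\<in>A. l a * a i)}"

lemma convex_fn_convex_combinations: "convex_fn (convex_combinations A)"
  unfolding convex_fn_def
proof (intro ballI allI impI)
  fix x y and u v :: real
  assume "x \<in> convex_combinations A" "y \<in> convex_combinations A"
    and "0 \<le> u" "0 \<le> v" "u + v = 1"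
  then obtain l l' where l: "\<forall>a\<in>A. 0 \<le> l a" "sum l A = 1" "x = (\<lambda>i. \<Sum>a\<in>A. l a * a i)"
    and l': "\<forall>a\<in>A. 0 \<le> l' a" "sum l' A = 1" "y = (\<lambda>i. \<Sum>a\<in>A. l' a * a i)"
    unfolding convex_combinations_def by blast
  define m where "m a = u * l a + v * l' a" for a
  have "\<forall>a\<in>A. 0 \<le> m a"
    using l(1) l'(1) \<open>0 \<le> u\<close> \<open>0 \<le> v\<close> by (simp add: m_def)
  moreover have "sum m A = 1"
    using l(2) l'(2) \<open>u + v = 1\<close> by (simp add: m_def sum.distrib flip: sum_distrib_left)
  moreover have "(\<lambda>i. u * x i + v * y i) = (\<lambda>i. \<Sum>a\<in>A. m a * a i)"
    unfolding l(3) l'(3) m_def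
    by (simp add: sum.distrib sum_distrib_left distrib_right mult.assoc)
  ultimately show "(\<lambda>i. u * x i + v * y i) \<in> convex_combinations A"
    unfolding convex_combinations_def by blast
qed

lemma subset_convex_combinations:
  assumes "finite A"
  shows "A \<subseteq> convex_combinations A"
proof
  fix b
  assume "b \<in> A"
  define l where "l a = (if a = b then 1 else 0 :: real)" for a
  have "b = (\<lambda>i. \<Sum>a\<in>A. l a * a i)"
  proof
    fix i
    have "(\<Sum>a\<in>A. l a * a i) = (\<Sum>a\<in>A. if a = b then b i else 0)"
      by (rule sum.cong) (simp_all add: l_def)
    also have "\<dots> = b i"
      using assms \<open>b \<in> A\<close> by simp
    finally show "b i = (\<Sum>a\<in>A. l a * a i)" ..
  qed
  moreover have "sum l A = 1"
    using assms \<open>b \<in> A\<close> by (simp add: l_def)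
  moreover have "\<forall>a\<in>A. 0 \<le> l a"
    by (simp add: l_def)
  ultimately show "b \<in> convex_combinations A"
    unfolding convex_combinations_def by blast
qed

lemma conv_fn_subset_convex_combinations:
  "finite A \<Longrightarrow> conv_fn A \<subseteq> convex_combinations A"
  unfolding conv_fn_def
  using subset_convex_combinations convex_fn_convex_combinations by blast

lemma integral_convex_combination_01:
  fixes l c :: "'a \<Rightarrow> real"
  assumes "finite A" "\<forall>a\<in>A. 0 \<le> l a" "sum l A = 1" "\<forall>a\<in>A. c a \<in> {0, 1}"
    and "(\<Sum>a\<in>A. l a * c a) \<in> \<int>" "b \<in> A" "0 < l b"
  shows "c b = (\<Sum>a\<in>A. l a * c a)"
proof -
  define s where "s = (\<Sum>a\<in>A. l a * c a)"
  have lc: "\<forall>a\<in>A. 0 \<le> l a * c a" and lc': "\<forall>a\<in>A. 0 \<le> l a * (1 - c a)"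
    using assms(2,4) by auto
  have s': "(\<Sum>a\<in>A. l a * (1 - c a)) = 1 - s"
    using assms(3) by (simp add: s_def right_diff_distrib sum_subtractf)
  have "0 \<le> s"
    unfolding s_def using lc by (simp add: sum_nonneg)
  moreover have "0 \<le> 1 - s"
    unfolding s'[symmetric] using lc' by (simp add: sum_nonneg)
  moreover obtain k where "s = of_int k"
    using assms(5) by (auto simp: s_def elim: Ints_cases)
  ultimately have "s = 0 \<or> s = 1"
    by (cases "k \<le> 0") auto
  then show ?thesis
  proof
    assume "s = 0"
    then have "l b * c b = 0"
      using lc assms(1,6) by (simp add: s_def sum_nonneg_eq_0_iff)
    with \<open>0 < l b\<close> \<open>s = 0\<close> show ?thesis by (simp add: s_def)
  next
    assume "s = 1"
    then have "l b * (1 - c b) = 0"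
      using lc' s' assms(1,6) by (simp add: sum_nonneg_eq_0_iff)
    with \<open>0 < l b\<close> \<open>s = 1\<close> show ?thesis by (simp add: s_def)
  qed
qed

lemma integral_point_in_convex_combinations:
  assumes "finite A" and A01: "\<forall>a\<in>A. \<forall>i<d. a i \<in> {0, 1}"
    and A_eqI: "\<forall>a\<in>A. \<forall>b\<in>A. (\<forall>i<d. a i = b i) \<longrightarrow> a = b"
    and "y \<in> convex_combinations A" "\<forall>i<d. y i \<in> \<int>"
  shows "y \<in> A"
proof -
  obtain l where l: "\<forall>a\<in>A. 0 \<le> l a" "sum l A = 1" and y: "y = (\<lambda>i. \<Sum>a\<in>A. l a * a i)"
    using assms(4) unfolding convex_combinations_def by blast
  have agree: "a i = y i" if "a \<in> A" "0 < l a" "i < d" for a i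
    using integral_convex_combination_01[OF assms(1) l, of "\<lambda>a. a i"] that A01 assms(5) y
    by simp
  have "\<exists>a\<in>A. 0 < l a"
  proof (rule ccontr)
    assume "\<not> (\<exists>a\<in>A. 0 < l a)"
    then have "sum l A \<le> 0" by (intro sum_nonpos) (auto simp: not_less)
    with l(2) show False by simp
  qed
  then obtain a0 where a0: "a0 \<in> A" "0 < l a0" by blast
  have support: "a = a0" if "a \<in> A" "0 < l a" for a
  proof -
    have "\<forall>i<d. a i = a0 i"
      by (simp add: agree[OF that] agree[OF a0])
    with A_eqI that(1) a0(1) show ?thesis by blast
  qed
  have "y = a0"
  proof
    fix i
    have "y i = (\<Sum>a\<in>A. l a * a0 i)"
      unfolding y using l(1) support
      by (intro sum.cong) (auto simp: order.order_iff_strict)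
    also have "\<dots> = a0 i"
      using l(2) by (simp flip: sum_distrib_right)
    finally show "y i = a0 i" .
  qed
  with a0 show ?thesis by simp
qed

lemma inj_to_real: "inj to_real"
proof (rule injI)
  fix a b :: "nat \<Rightarrow> int"
  assume eq: "to_real a = to_real b"
  show "a = b"
  proof
    fix i
    show "a i = b i"
      using fun_cong[OF eq, of i] by (simp add: to_real_def)
  qed
qed

lemma integral_points_conv_Xset:
  "{y. (\<forall>i>d. y i = 0) \<and> to_real y \<in> conv_fn (to_real ` Xset d)} = Xset d"
proof (intro equalityI subsetI)
  fix y
  assume "y \<in> {y. (\<forall>i>d. y i = 0) \<and> to_real y \<in> conv_fn (to_real ` Xset d)}"
  then have y: "to_real y \<in> convex_combinations (to_real ` Xset d)"
    using conv_fn_subset_convex_combinations finite_Xset by blast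
  have "to_real y \<in> to_real ` Xset d"
  proof (rule integral_point_in_convex_combinations[OF _ _ _ y])
    show "finite (to_real ` Xset d)"
      by (simp add: finite_Xset)
    show "\<forall>a\<in>to_real ` Xset d. \<forall>i<d. a i \<in> {0, 1}"
      using Xset_coord_01 by (fastforce simp: to_real_def)
    show "\<forall>a\<in>to_real ` Xset d. \<forall>b\<in>to_real ` Xset d. (\<forall>i<d. a i = b i) \<longrightarrow> a = b"
      using Xset_eqI by (auto simp: to_real_def)
    show "\<forall>i<d. to_real y i \<in> \<int>"
      by (simp add: to_real_def)
  qed
  then show "y \<in> Xset d"
    using inj_to_real by (auto dest: injD)
next
  fix a
  assume "a \<in> Xset d"
  then show "a \<in> {y. (\<forall>i>d. y i = 0) \<and> to_real y \<in> conv_fn (to_real ` Xset d)}"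
    using Xset_coord_above unfolding conv_fn_def by blast
qed

lemma tvec_eq: "tvec d i = (\<Sum>x\<in>cube01_nz d. liftpt d x i)"
proof -
  have "tvec d i = (\<Sum>a\<in>Xset d - {(\<lambda>_. 0)}. a i)"
    unfolding tvec_def using finite_Xset by (intro sum.mono_neutral_right) auto
  then show ?thesis
    by (simp add: sum_Xset_diff_zero)
qed

lemma multiplicity_le_card_cube01_nz:
  fixes m :: "(nat \<Rightarrow> nat) \<Rightarrow> nat"
  assumes coords: "\<forall>i. (\<Sum>x\<in>cube01_nz d. liftpt d x i)
      = (\<Sum>x\<in>cube01_nz d. int (m x) * liftpt d x i)"
    and x: "x \<in> cube01_nz d"
  shows "m x \<le> card (cube01_nz d)"
proof -
  obtain i where i: "i < d" "x i = 1"
    using cube01_nz_obtain_one[OF x] by blast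
  have coord_le_1: "liftpt d y i \<le> 1" if "y \<in> cube01_nz d" for y
    using that i(1) cube01_less_2[of y d i] by (simp add: cube01_nz_def liftpt_below)
  have "int (m x) = int (m x) * liftpt d x i"
    using i by (simp add: liftpt_below)
  also have "\<dots> \<le> (\<Sum>y\<in>cube01_nz d. int (m y) * liftpt d y i)"
    using x i(1) by (intro member_le_sum) (simp_all add: finite_cube01_nz liftpt_below)
  also have "\<dots> = (\<Sum>y\<in>cube01_nz d. liftpt d y i)"
    using coords by simp
  also have "\<dots> \<le> int (card (cube01_nz d))"
    using sum_mono[OF coord_le_1] by simp
  finally show ?thesis by simp
qed

lemma power2_less_4_mult_pred: "0 < d \<Longrightarrow> (2::nat) ^ d < 4 * (2 ^ d - 1)"
  using one_less_power[of "2::nat" d] by linarith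

lemma Xset_multiplicities_eq_1:
  fixes \<mu> :: "(nat \<Rightarrow> int) \<Rightarrow> nat"
  assumes "\<forall>i. tvec d i = (\<Sum>a\<in>Xset d - {(\<lambda>_. 0)}. int (\<mu> a) * a i)"
  shows "\<forall>a\<in>Xset d - {(\<lambda>_. 0)}. \<mu> a = 1"
proof -
  define M :: nat where "M = 4 * (2 ^ d - 1)"
  define m where "m x = \<mu> (liftpt d x)" for x
  have coords: "\<forall>i. (\<Sum>x\<in>cube01_nz d. liftpt d x i)
      = (\<Sum>x\<in>cube01_nz d. int (m x) * liftpt d x i)"
    using assms by (simp add: tvec_eq sum_Xset_diff_zero m_def)
  have M_large: "2 ^ d < M" if "x \<in> cube01_nz d" for x
    using cube01_nz_obtain_one[OF that] power2_less_4_mult_pred[of d] by (fastforce simp: M_def)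
  have m_less: "m x < M" if "x \<in> cube01_nz d" for x
    using multiplicity_le_card_cube01_nz[OF coords that] card_cube01_nz_less[of d]
      M_large[OF that] by linarith
  have top: "liftpt d x d = int M ^ bin_val d x" for x
    by (simp add: liftpt_top M_def)
  have "int (\<Sum>x\<in>cube01_nz d. 1 * M ^ bin_val d x) = (\<Sum>x\<in>cube01_nz d. liftpt d x d)"
    by (simp add: top)
  also have "\<dots> = (\<Sum>x\<in>cube01_nz d. int (m x) * liftpt d x d)"
    using coords by simp
  also have "\<dots> = int (\<Sum>x\<in>cube01_nz d. m x * M ^ bin_val d x)"
    by (simp add: top)
  finally have top_sum: "(\<Sum>x\<in>cube01_nz d. 1 * M ^ bin_val d x)
      = (\<Sum>x\<in>cube01_nz d. m x * M ^ bin_val d x)"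
    by (simp only: of_nat_eq_iff)
  have "inj_on (bin_val d) (cube01_nz d)"
    by (rule inj_on_subset[OF inj_on_bin_val]) (simp add: cube01_nz_def)
  moreover have "\<forall>x\<in>cube01_nz d. 1 < M"
    using M_large by (meson le_less_trans one_le_power one_le_numeral)
  ultimately have "\<forall>x\<in>cube01_nz d. 1 = m x"
    using finite_cube01_nz m_less top_sum by (intro digit_sum_unique_on) auto
  then show ?thesis
    by (simp add: Xset_diff_zero m_def)
qed

theorem mainTheorem3:
  fixes d :: nat
  assumes "d \<ge> 1"
  shows "{y :: nat \<Rightarrow> int. (\<forall>i>d. y i = 0) \<and> to_real y \<in> conv_fn (to_real ` Xset d)} = Xset d
    \<and> (\<forall>\<mu> :: (nat \<Rightarrow> int) \<Rightarrow> nat.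
          (\<forall>i. tvec d i = (\<Sum>a\<in>Xset d - {(\<lambda>_. 0)}. int (\<mu> a) * a i))
          \<longrightarrow> (\<forall>a\<in>Xset d - {(\<lambda>_. 0)}. \<mu> a = 1))"
  \<comment> \<open>Both claims hold for \<open>d = 0\<close> as well.\<close>
  using integral_points_conv_Xset Xset_multiplicities_eq_1 by blast

end
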